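(* Let $\alpha\in\mathbb{R}\setminus\mathbb{Q}$ with continued fraction approximants $\frac{p_m}{q_m}$. There is a subsequence $(\frac{p_{m_l}}{q_{m_l}})_{l}$ such that for every analytic function $f$ on $\mathbb{T}$ with $\int_{\mathbb{T}}f(\theta)\,d\theta=0$, $$\lim_{l\to\infty}\big(f(x)+f(x+\alpha)+\cdots+f(x+(q_{m_l}-1)\alpha)\big)=0$$ uniformly in $x\in\mathbb{T}$.
   Context: $\mathbb{T}=\mathbb{R}/\mathbb{Z}$; "analytic on $\mathbb{T}$" means real analytic, i.e. extending holomorphically to a strip $|\mathrm{Im}\,\theta|\le\delta_0$ for some $\delta_0>0$. The subsequence depends only on $\alpha$, not on $f$. *)

theory Defs
  imports "HOL-Complex_Analysis.Complex_Analysis"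
begin

fun cf_rem :: "real \<Rightarrow> nat \<Rightarrow> real" where
  "cf_rem x 0 = x"
| "cf_rem x (Suc n) = 1 / frac (cf_rem x n)"

definition cf_digit :: "real \<Rightarrow> nat \<Rightarrow> int" where
  "cf_digit x n = \<lfloor>cf_rem x n\<rfloor>"

text \<open>Numerators p_n and denominators q_n of the convergents p_n / q_n
  (standard recurrences with p_(-1) = 1, q_(-1) = 0, p_(-2) = 0, q_(-2) = 1).\<close>
fun cf_p :: "real \<Rightarrow> nat \<Rightarrow> int" where
  "cf_p x 0 = cf_digit x 0"
| "cf_p x (Suc 0) = cf_digit x 1 * cf_digit x 0 + 1"
| "cf_p x (Suc (Suc n)) = cf_digit x (Suc (Suc n)) * cf_p x (Suc n) + cf_p x n"

fun cf_q :: "real \<Rightarrow> nat \<Rightarrow> int" where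
  "cf_q x 0 = 1"
| "cf_q x (Suc 0) = cf_digit x 1"
| "cf_q x (Suc (Suc n)) = cf_digit x (Suc (Suc n)) * cf_q x (Suc n) + cf_q x n"

text \<open>A (complex-valued) real-analytic function on the circle T = R/Z, viewed as a 1-periodic
  function on R that extends holomorphically to a strip |Im z| < delta.\<close>
definition analytic_on_circle :: "(real \<Rightarrow> complex) \<Rightarrow> bool" where
  "analytic_on_circle f \<longleftrightarrow>
     (\<forall>x. f (x + 1) = f x) \<and>
     (\<exists>\<delta>>0. \<exists>F. F holomorphic_on {z. \<bar>Im z\<bar> < \<delta>} \<and> (\<forall>x. F (complex_of_real x) = f x))"

end

theory Submission
  imports Defs
begin

text \<open>The subsequence can be taken to be the whole sequence of convergents: along the
  denominators \<open>q\<^sub>n\<close>, the Birkhoff sums of every \<open>C\<^sup>1\<close> function of mean zero on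
  the circle tend to zero uniformly. Given \<open>\<epsilon> > 0\<close>, approximate \<open>f'\<close> by a
  trigonometric polynomial and integrate, so that \<open>f = h + P\<close> with \<open>P\<close> a
  trigonometric polynomial without constant term and \<open>h\<close> an \<open>\<epsilon>\<close>-Lipschitz
  function with a periodic primitive.

  For a character \<open>e\<^sub>n\<close> with \<open>n \<noteq> 0\<close> the geometric sum gives
  \<open>|\<Sum>k<q. e\<^sub>n (x + k \<alpha>)| \<le> C\<^sub>n |q \<alpha> - p|\<close>, which is \<open>O(1 / q\<^sub>n)\<close>
  at a convergent. For \<open>h\<close> there is a Denjoy-Koksma bound: as
  \<open>|q\<^sub>n \<alpha> - p\<^sub>n| \<le> 1 / q\<^sub>n\<close>, moving the points \<open>x + k \<alpha>\<close> to
  \<open>x + k p\<^sub>n / q\<^sub>n\<close> costs at most \<open>\<epsilon>\<close> in total; since \<open>p\<^sub>n\<close> and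
  \<open>q\<^sub>n\<close> are coprime these are the points \<open>x + j / q\<^sub>n\<close> in another order, and a
  Riemann sum of a mean-zero \<open>\<epsilon>\<close>-Lipschitz function over \<open>q\<close> equally spaced
  points is at most \<open>\<epsilon>\<close>.\<close>

section \<open>Continued fractions\<close>

lemma cf_rem_notin_Rats:
  assumes "x \<notin> \<rat>"
  shows "cf_rem x n \<notin> \<rat>"
proof (induction n)
  case 0
  then show ?case using assms by simp
next
  case (Suc n)
  have "frac (cf_rem x n) \<notin> \<rat>"
  proof
    assume "frac (cf_rem x n) \<in> \<rat>"
    then have "frac (cf_rem x n) + of_int \<lfloor>cf_rem x n\<rfloor> \<in> \<rat>" by (intro Rats_add) auto
    with Suc show False by (simp add: frac_def)
  qed
  then show ?case by (metis Rats_inverse inverse_eq_divide cf_rem.simps(2) inverse_inverse_eq)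
qed

lemma frac_cf_rem_pos: "x \<notin> \<rat> \<Longrightarrow> frac (cf_rem x n) > 0"
  using cf_rem_notin_Rats[of x n] Ints_subset_Rats frac_ge_0 frac_eq_0_iff
  by (metis order_le_less subsetD)

lemma cf_rem_Suc_gt_1: "x \<notin> \<rat> \<Longrightarrow> cf_rem x (Suc n) > 1"
  using frac_cf_rem_pos[of x n] frac_lt_1[of "cf_rem x n"] by simp

lemma cf_digit_Suc_ge_1: "x \<notin> \<rat> \<Longrightarrow> cf_digit x (Suc n) \<ge> 1"
  using cf_rem_Suc_gt_1[of x n] unfolding cf_digit_def by linarith

lemma cf_rem_eq_digit_plus:
  "x \<notin> \<rat> \<Longrightarrow> cf_rem x n = of_int (cf_digit x n) + 1 / cf_rem x (Suc n)"
  using frac_cf_rem_pos[of x n] by (simp add: cf_digit_def frac_def)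

fun cf_p_prev :: "real \<Rightarrow> nat \<Rightarrow> int" where
  "cf_p_prev x 0 = 1"
| "cf_p_prev x (Suc n) = cf_p x n"

fun cf_q_prev :: "real \<Rightarrow> nat \<Rightarrow> int" where
  "cf_q_prev x 0 = 0"
| "cf_q_prev x (Suc n) = cf_q x n"

lemma cf_p_Suc: "cf_p x (Suc n) = cf_digit x (Suc n) * cf_p x n + cf_p_prev x n"
  by (cases n) auto

lemma cf_q_Suc: "cf_q x (Suc n) = cf_digit x (Suc n) * cf_q x n + cf_q_prev x n"
  by (cases n) auto

lemma cf_q_bounds:
  assumes "x \<notin> \<rat>"
  shows "1 \<le> cf_q x n \<and> 0 \<le> cf_q_prev x n \<and> cf_q_prev x n \<le> cf_q x n"
proof (induction n)
  case 0
  then show ?case by simp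
next
  case (Suc n)
  have "cf_q x n \<le> cf_digit x (Suc n) * cf_q x n"
    using cf_digit_Suc_ge_1[OF assms] Suc.IH by (simp add: mult_le_cancel_right1)
  with Suc.IH show ?case unfolding cf_q_Suc cf_q_prev.simps by linarith
qed

lemma cf_q_ge_1: "x \<notin> \<rat> \<Longrightarrow> cf_q x n \<ge> 1"
  using cf_q_bounds by blast

lemma cf_q_Suc_Suc_gt: "x \<notin> \<rat> \<Longrightarrow> cf_q x (Suc (Suc n)) > cf_q x n"
proof -
  assume x: "x \<notin> \<rat>"
  have "cf_q x (Suc n) \<le> cf_digit x (Suc (Suc n)) * cf_q x (Suc n)"
    using cf_digit_Suc_ge_1[OF x, of "Suc n"] cf_q_ge_1[OF x, of "Suc n"]
    by (simp add: mult_le_cancel_right1)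
  with cf_q_ge_1[OF x, of "Suc n"] show ?thesis unfolding cf_q.simps(3) by linarith
qed

lemma index_le_twice_cf_q: "x \<notin> \<rat> \<Longrightarrow> int n \<le> 2 * cf_q x n"
proof (induction n rule: less_induct)
  case (less n)
  consider "n = 0" | "n = 1" | m where "n = Suc (Suc m)"
    by (metis One_nat_def not0_implies_Suc)
  then show ?case
  proof cases
    case 3
    then have "int m \<le> 2 * cf_q x m" using less by simp
    with 3 cf_q_Suc_Suc_gt[OF less.prems, of m] show ?thesis by (simp del: cf_q.simps)
  qed (use cf_q_ge_1[OF less.prems, of 1] in auto)
qed

lemma cf_q_tendsto_at_top:
  assumes "x \<notin> \<rat>"
  shows "filterlim (\<lambda>n. real_of_int (cf_q x n)) at_top sequentially"
proof (rule filterlim_at_top_mono)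
  show "filterlim (\<lambda>n. 1 / 2 * real n) at_top sequentially"
    by (intro filterlim_tendsto_pos_mult_at_top[OF tendsto_const] filterlim_real_sequentially) simp
  have "1 / 2 * real n \<le> real_of_int (cf_q x n)" for n
  proof -
    have "real_of_int (int n) \<le> real_of_int (2 * cf_q x n)"
      using index_le_twice_cf_q[OF assms] by (simp only: of_int_le_iff)
    then show ?thesis by simp
  qed
  then show "\<forall>\<^sub>F n in sequentially. 1 / 2 * real n \<le> real_of_int (cf_q x n)"
    by simp
qed

lemma cf_convergent_det: "cf_p x n * cf_q_prev x n - cf_p_prev x n * cf_q x n = (-1) ^ Suc n"
proof (induction n)
  case (Suc n)
  have "cf_p x (Suc n) * cf_q_prev x (Suc n) - cf_p_prev x (Suc n) * cf_q x (Suc n)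
      = - (cf_p x n * cf_q_prev x n - cf_p_prev x n * cf_q x n)"
    by (simp add: cf_p_Suc cf_q_Suc algebra_simps)
  with Suc show ?case by simp
qed simp

lemma coprime_cf_p_cf_q: "coprime (cf_p x n) (cf_q x n)"
proof (rule coprimeI)
  fix d assume "d dvd cf_p x n" "d dvd cf_q x n"
  then have "d dvd (-1) ^ Suc n" by (metis cf_convergent_det dvd_diff dvd_mult dvd_mult2)
  then show "is_unit d" by (rule dvd_unit_imp_unit) simp
qed

lemma cf_rem_convergent_eq:
  assumes "x \<notin> \<rat>"
  shows "x * (cf_q x n * cf_rem x (Suc n) + cf_q_prev x n)
         = cf_p x n * cf_rem x (Suc n) + cf_p_prev x n"
proof (induction n)
  case 0
  have "frac x > 0" using frac_cf_rem_pos[OF assms, of 0] by simp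
  then show ?case by (simp add: cf_digit_def frac_def field_simps)
next
  case (Suc n)
  let ?r = "cf_rem x (Suc n)" and ?r' = "cf_rem x (Suc (Suc n))" and ?a = "cf_digit x (Suc n)"
  have r: "?r = ?a + 1 / ?r'" using cf_rem_eq_digit_plus[OF assms] by blast
  have "?r' > 0" using cf_rem_Suc_gt_1[OF assms] by (smt (verit))
  with Suc have "x * ((?a * cf_q x n + cf_q_prev x n) * ?r' + cf_q x n)
      = (?a * cf_p x n + cf_p_prev x n) * ?r' + cf_p x n"
    unfolding r by (simp add: field_simps)
  then show ?case by (simp add: cf_p_Suc cf_q_Suc)
qed

lemma cf_convergent_error_le:
  assumes "x \<notin> \<rat>"
  shows "\<bar>of_int (cf_q x n) * x - of_int (cf_p x n)\<bar> \<le> 1 / of_int (cf_q x n)"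
proof -
  define q where "q = real_of_int (cf_q x n)"
  define p where "p = real_of_int (cf_p x n)"
  define q' where "q' = real_of_int (cf_q_prev x n)"
  define p' where "p' = real_of_int (cf_p_prev x n)"
  define r where "r = cf_rem x (Suc n)"
  have q: "q \<ge> 1" "q' \<ge> 0" using cf_q_bounds[OF assms, of n] by (auto simp: q_def q'_def)
  have "r > 1" using cf_rem_Suc_gt_1[OF assms] by (simp add: r_def)
  with q have den: "q * r + q' \<ge> q" by (smt (verit) mult_le_cancel_left1)
  have I: "x * (q * r + q') = p * r + p'"
    using cf_rem_convergent_eq[OF assms, of n] by (simp add: p_def q_def p'_def q'_def r_def)
  have "(q * x - p) * (q * r + q') = q * (x * (q * r + q')) - p * (q * r + q')"
    by (simp add: algebra_simps)
  also have "\<dots> = q * (p * r + p') - p * (q * r + q')" by (simp only: I)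
  also have "\<dots> = p' * q - p * q'" by (simp add: algebra_simps)
  finally have "\<bar>q * x - p\<bar> * (q * r + q') = \<bar>p' * q - p * q'\<bar>"
    using den q by (metis abs_mult abs_of_nonneg order_trans zero_le_one)
  also have "\<dots> = 1"
    using arg_cong[OF cf_convergent_det[of x n], of "\<lambda>k. \<bar>real_of_int k\<bar>"]
    by (simp add: p_def q_def p'_def q'_def abs_minus_commute)
  finally have "\<bar>q * x - p\<bar> = 1 / (q * r + q')"
    using den q by (simp add: field_simps)
  also have "\<dots> \<le> 1 / q" using den q by (intro divide_left_mono) auto
  finally show ?thesis by (simp add: q_def p_def)
qed

section \<open>Periodic functions and their derivatives\<close>

lemma vector_derivative_bound_imp_lipschitz:
  fixes h :: "real \<Rightarrow> 'a::real_normed_vector"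
  assumes deriv: "\<And>t. (h has_vector_derivative h' t) (at t)" and bound: "\<And>t. norm (h' t) \<le> B"
  shows "B-lipschitz_on UNIV h"
proof (rule lipschitz_onI)
  show "B \<ge> 0" using order_trans[OF norm_ge_zero bound] .
  fix a b :: real
  have "norm (h a - h b) \<le> B * norm (a - b)"
  proof (rule differentiable_bound[of UNIV h "\<lambda>t u. u *\<^sub>R h' t"])
    show "(h has_derivative (\<lambda>u. u *\<^sub>R h' t)) (at t within UNIV)" for t
      using deriv by (simp add: has_vector_derivative_def)
    show "onorm (\<lambda>u. u *\<^sub>R h' t) \<le> B" for t :: real
      using mult_right_mono[OF bound abs_ge_zero] by (intro onorm_le) (simp add: mult.commute)
  qed auto
  then show "dist (h a) (h b) \<le> B * dist a b" by (simp add: dist_norm)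
qed

lemma periodic_shift_int:
  assumes "\<And>t. \<phi> (t + 1) = \<phi> t"
  shows "\<phi> (t + of_int k) = \<phi> t"
proof -
  have shift_nat: "\<phi> (s + of_nat n) = \<phi> s" for s n
    by (induction n) (auto simp: assms[of "s + of_nat _", symmetric] algebra_simps)
  show ?thesis
  proof (cases "k \<ge> 0")
    case True
    then show ?thesis using shift_nat[of t "nat k"] by simp
  next
    case False
    then show ?thesis using shift_nat[of "t + of_int k" "nat (- k)"] by simp
  qed
qed

lemma has_vector_derivative_shift:
  assumes "(f has_vector_derivative D) (at (t + c))"
  shows "((\<lambda>s. f (s + c)) has_vector_derivative D) (at t)"
proof -
  have "((\<lambda>s. s + c) has_vector_derivative 1) (at t)"
    by (auto intro!: derivative_eq_intros)
  from vector_diff_chain_at[OF this assms] show ?thesis by (simp add: o_def)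
qed

lemma periodic_vector_derivative:
  assumes periodic: "\<And>t. f (t + 1) = f t"
    and deriv: "\<And>t. (f has_vector_derivative D t) (at t)"
  shows "D (t + 1) = D t"
proof -
  have "((\<lambda>s. f (s + 1)) has_vector_derivative D (t + 1)) (at t)"
    by (rule has_vector_derivative_shift[OF deriv])
  then have "(f has_vector_derivative D (t + 1)) (at t)" by (simp add: periodic)
  then show ?thesis using deriv[of t] by (rule vector_derivative_unique_at)
qed

lemma periodic_primitive:
  fixes f G :: "real \<Rightarrow> 'a::banach"
  assumes periodic: "\<And>t. f (t + 1) = f t" and mean_zero: "integral {0..1} f = 0"
    and primitive: "\<And>t. (G has_vector_derivative f t) (at t)"
  shows "G (t + 1) = G t"
proof -
  have "(f has_integral (G 1 - G 0)) {0..1}"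
    by (rule fundamental_theorem_of_calculus) (auto intro: has_vector_derivative_at_within primitive)
  with mean_zero have G10: "G 1 = G 0" by (simp add: integral_unique)
  have "((\<lambda>s. G (s + 1) - G s) has_vector_derivative 0) (at s within UNIV)" for s
  proof -
    have "((\<lambda>s. G (s + 1)) has_vector_derivative f (s + 1)) (at s)"
      by (rule has_vector_derivative_shift[OF primitive])
    from has_vector_derivative_diff[OF this primitive] show ?thesis by (simp add: periodic)
  qed
  then obtain c where "\<And>s. G (s + 1) - G s = c"
    using has_vector_derivative_zero_constant[of UNIV "\<lambda>s. G (s + 1) - G s"] by auto
  from this[of t] this[of 0] G10 show ?thesis by simp
qed

lemma analytic_on_circle_derivative_primitive:
  assumes "analytic_on_circle f"
  obtains D G where "\<And>t. (f has_vector_derivative D t) (at t)" "continuous_on UNIV D"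
    "\<And>t. (G has_vector_derivative f t) (at t)"
proof -
  obtain \<delta> F where "\<delta> > 0" and hol: "F holomorphic_on {z. \<bar>Im z\<bar> < \<delta>}"
    and F: "\<And>x. F (complex_of_real x) = f x"
    using assms unfolding analytic_on_circle_def by blast
  define U where "U = {z. Im z < \<delta>} \<inter> {z. Im z > - \<delta>}"
  have "open U" unfolding U_def by (intro open_Int open_halfspace_Im_lt open_halfspace_Im_gt)
  have "convex U" unfolding U_def by (intro convex_Int convex_halfspace_Im_lt convex_halfspace_Im_gt)
  have real_in_U: "complex_of_real x \<in> U" for x using \<open>\<delta> > 0\<close> by (simp add: U_def)
  have "F holomorphic_on U" using hol by (rule holomorphic_on_subset) (auto simp: U_def)
  have f_eq: "f = (\<lambda>x. F (complex_of_real x))" using F by auto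
  obtain \<Phi> where \<Phi>: "\<And>z. z \<in> U \<Longrightarrow> (\<Phi> has_field_derivative F z) (at z within U)"
    using holomorphic_convex_primitive'[OF \<open>convex U\<close> \<open>open U\<close> \<open>F holomorphic_on U\<close>] by blast
  have "(f has_vector_derivative deriv F (complex_of_real t)) (at t)" for t
    unfolding f_eq using \<open>F holomorphic_on U\<close> \<open>open U\<close> real_in_U
    by (intro has_vector_derivative_real_field holomorphic_derivI)
  moreover have "continuous_on UNIV (\<lambda>t. deriv F (complex_of_real t))"
    using holomorphic_on_imp_continuous_on[OF holomorphic_deriv[OF \<open>F holomorphic_on U\<close> \<open>open U\<close>]]
    by (rule continuous_on_compose2) (auto intro: continuous_intros real_in_U)
  moreover have "((\<lambda>t. \<Phi> (complex_of_real t)) has_vector_derivative f t) (at t)" for t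
    using has_vector_derivative_real_field[of \<Phi> "F (complex_of_real t)"] \<Phi>[OF real_in_U[of t]]
    by (simp add: at_within_open[OF real_in_U \<open>open U\<close>] F)
  ultimately show ?thesis by (rule that)
qed

section \<open>Characters and trigonometric polynomials\<close>

definition circ_char :: "int \<Rightarrow> real \<Rightarrow> complex" where
  "circ_char n t = exp (\<i> * complex_of_real (2 * pi * of_int n * t))"

lemma circ_char_add: "circ_char n (s + t) = circ_char n s * circ_char n t"
  unfolding circ_char_def by (simp add: algebra_simps exp_add)

lemma circ_char_add_freq: "circ_char (n + m) t = circ_char n t * circ_char m t"
  unfolding circ_char_def by (simp add: algebra_simps exp_add)

lemma circ_char_0 [simp]: "circ_char 0 t = 1"
  unfolding circ_char_def by simp

lemma circ_char_at_0 [simp]: "circ_char n 0 = 1"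
  unfolding circ_char_def by simp

lemma norm_circ_char [simp]: "norm (circ_char n t) = 1"
  unfolding circ_char_def by (simp only: norm_exp_i_times)

lemma cnj_circ_char: "cnj (circ_char n t) = circ_char (- n) t"
  unfolding circ_char_def by (simp add: exp_cnj)

lemma circ_char_shift_int: "circ_char n (t + of_int k) = circ_char n t"
proof -
  have "circ_char n (of_int k) = exp (complex_of_real (2 * pi * of_int (n * k)) * \<i>)"
    unfolding circ_char_def by (simp add: algebra_simps)
  also have "\<dots> = 1" by (rule exp_eq_1[THEN iffD2]) (auto intro!: exI[of _ "n * k"])
  finally show ?thesis by (simp add: circ_char_add)
qed

lemma circ_char_periodic: "circ_char n (t + 1) = circ_char n t"
  using circ_char_shift_int[of n t 1] by simp

lemma circ_char_power: "circ_char n t ^ k = circ_char n (of_nat k * t)"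
  by (induction k) (auto simp: circ_char_add algebra_simps)

lemma has_vector_derivative_circ_char:
  "(circ_char n has_vector_derivative (2 * pi * \<i> * of_int n) * circ_char n t) (at t)"
  unfolding circ_char_def[abs_def]
  by (auto intro!: derivative_eq_intros has_vector_derivative_real_field simp: algebra_simps)

lemma circ_char_lipschitz: "(2 * pi * \<bar>of_int n\<bar>)-lipschitz_on UNIV (circ_char n)"
  by (rule vector_derivative_bound_imp_lipschitz[OF has_vector_derivative_circ_char])
     (simp add: norm_mult)

lemma circ_char_neq_1:
  assumes "\<alpha> \<notin> \<rat>" "n \<noteq> 0"
  shows "circ_char n \<alpha> \<noteq> 1"
proof
  assume "circ_char n \<alpha> = 1"
  then obtain k :: int where "2 * pi * of_int n * \<alpha> = of_int (2 * k) * pi"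
    unfolding circ_char_def by (auto simp: exp_eq_1)
  then have "\<alpha> = of_int k / of_int n" using assms(2) by (simp add: field_simps)
  with assms(1) show False by simp
qed

lemma birkhoff_sum_circ_char_le:
  assumes "\<alpha> \<notin> \<rat>" "n \<noteq> 0"
  shows "norm (\<Sum>k<q. circ_char n (x + real k * \<alpha>))
         \<le> 2 * pi * \<bar>of_int n\<bar> / norm (circ_char n \<alpha> - 1) * \<bar>real q * \<alpha> - of_int p\<bar>"
proof -
  have ne: "circ_char n \<alpha> \<noteq> 1" using circ_char_neq_1[OF assms] .
  have "(\<Sum>k<q. circ_char n (x + real k * \<alpha>)) = circ_char n x * (\<Sum>k<q. circ_char n \<alpha> ^ k)"
    by (simp add: circ_char_add circ_char_power sum_distrib_left)
  also have "\<dots> = circ_char n x * ((circ_char n \<alpha> ^ q - 1) / (circ_char n \<alpha> - 1))"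
    using ne by (simp add: geometric_sum)
  finally have "norm (\<Sum>k<q. circ_char n (x + real k * \<alpha>))
      = norm (circ_char n \<alpha> ^ q - 1) / norm (circ_char n \<alpha> - 1)"
    by (simp add: norm_mult norm_divide)
  also have "circ_char n \<alpha> ^ q = circ_char n (real q * \<alpha> - of_int p)"
    using circ_char_shift_int[of n "real q * \<alpha> - of_int p" p] by (simp add: circ_char_power)
  also have "norm (circ_char n (real q * \<alpha> - of_int p) - 1)
      \<le> 2 * pi * \<bar>of_int n\<bar> * \<bar>real q * \<alpha> - of_int p\<bar>"
    using lipschitz_on_normD[OF circ_char_lipschitz, of "real q * \<alpha> - of_int p" 0]
    by (simp add: circ_char_def)
  finally show ?thesis using ne by (simp add: divide_right_mono field_simps)
qed

definition trig_poly :: "(complex \<times> int) list \<Rightarrow> real \<Rightarrow> complex" where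
  "trig_poly cs t = (\<Sum>c\<leftarrow>cs. fst c * circ_char (snd c) t)"

lemma trig_poly_Nil [simp]: "trig_poly [] t = 0"
  by (simp add: trig_poly_def)

lemma trig_poly_Cons [simp]: "trig_poly (c # cs) t = fst c * circ_char (snd c) t + trig_poly cs t"
  by (simp add: trig_poly_def)

lemma trig_poly_append [simp]: "trig_poly (cs @ ds) t = trig_poly cs t + trig_poly ds t"
  by (simp add: trig_poly_def)

definition scale_coeffs :: "complex \<Rightarrow> (complex \<times> int) list \<Rightarrow> (complex \<times> int) list" where
  "scale_coeffs a cs = map (\<lambda>c. (a * fst c, snd c)) cs"

definition cnj_coeffs :: "(complex \<times> int) list \<Rightarrow> (complex \<times> int) list" where
  "cnj_coeffs cs = map (\<lambda>c. (cnj (fst c), - snd c)) cs"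

definition mult_coeffs :: "(complex \<times> int) list \<Rightarrow> (complex \<times> int) list \<Rightarrow> (complex \<times> int) list" where
  "mult_coeffs cs ds = concat (map (\<lambda>c. map (\<lambda>d. (fst c * fst d, snd c + snd d)) ds) cs)"

definition antideriv_coeffs :: "(complex \<times> int) list \<Rightarrow> (complex \<times> int) list" where
  "antideriv_coeffs cs = map (\<lambda>c. (fst c / (2 * pi * \<i> * of_int (snd c)), snd c)) cs"

lemma trig_poly_scale_coeffs [simp]: "trig_poly (scale_coeffs a cs) t = a * trig_poly cs t"
  by (induction cs) (auto simp: scale_coeffs_def algebra_simps)

lemma trig_poly_cnj_coeffs [simp]: "trig_poly (cnj_coeffs cs) t = cnj (trig_poly cs t)"
  by (induction cs) (auto simp: cnj_coeffs_def cnj_circ_char)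

lemma trig_poly_mult_coeffs [simp]: "trig_poly (mult_coeffs cs ds) t = trig_poly cs t * trig_poly ds t"
proof -
  have "trig_poly (map (\<lambda>d. (a * fst d, n + snd d)) ds) t = a * circ_char n t * trig_poly ds t"
    for a n by (induction ds) (auto simp: algebra_simps circ_char_add_freq)
  then show ?thesis by (induction cs) (auto simp: mult_coeffs_def algebra_simps)
qed

lemma has_vector_derivative_trig_poly_antideriv:
  assumes "\<forall>c\<in>set cs. snd c \<noteq> 0"
  shows "(trig_poly (antideriv_coeffs cs) has_vector_derivative trig_poly cs t) (at t)"
  using assms
proof (induction cs)
  case Nil
  then show ?case by (simp add: antideriv_coeffs_def trig_poly_def[abs_def])
next
  case (Cons c cs)
  have "2 * pi * \<i> * of_int (snd c) \<noteq> 0" using Cons.prems by simp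
  then have "((\<lambda>t. fst c / (2 * pi * \<i> * of_int (snd c)) * circ_char (snd c) t)
      has_vector_derivative fst c * circ_char (snd c) t) (at t)"
    using has_vector_derivative_mult_right[OF has_vector_derivative_circ_char,
        of "fst c / (2 * pi * \<i> * of_int (snd c))" "snd c" t]
    by (simp add: field_simps)
  with Cons show ?case
    by (auto simp: antideriv_coeffs_def intro!: has_vector_derivative_add)
qed

lemma trig_poly_periodic: "trig_poly cs (t + 1) = trig_poly cs t"
  by (induction cs) (auto simp: circ_char_periodic)

lemma trig_poly_split_constant:
  "trig_poly cs t = trig_poly (filter (\<lambda>c. snd c \<noteq> 0) cs) t + (\<Sum>c\<leftarrow>filter (\<lambda>c. snd c = 0) cs. fst c)"
  by (induction cs) auto

lemma birkhoff_sum_trig_poly_le: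
  assumes "\<alpha> \<notin> \<rat>" "\<forall>c\<in>set cs. snd c \<noteq> 0"
  obtains C where "C \<ge> 0"
    "\<And>q p x. norm (\<Sum>k<q. trig_poly cs (x + real k * \<alpha>)) \<le> C * \<bar>real q * \<alpha> - of_int p\<bar>"
  using assms(2)
proof (induction cs arbitrary: thesis)
  case Nil
  then show ?case by auto
next
  case (Cons c cs)
  then obtain C where C: "C \<ge> 0"
    "\<And>q p x. norm (\<Sum>k<q. trig_poly cs (x + real k * \<alpha>)) \<le> C * \<bar>real q * \<alpha> - of_int p\<bar>"
    by auto
  define C1 where "C1 = norm (fst c) * (2 * pi * \<bar>of_int (snd c)\<bar> / norm (circ_char (snd c) \<alpha> - 1))"
  have "C1 + C \<ge> 0" using C(1) by (simp add: C1_def)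
  moreover have "norm (\<Sum>k<q. trig_poly (c # cs) (x + real k * \<alpha>)) \<le> (C1 + C) * \<bar>real q * \<alpha> - of_int p\<bar>"
    for q p x
  proof -
    have "(\<Sum>k<q. trig_poly (c # cs) (x + real k * \<alpha>))
        = fst c * (\<Sum>k<q. circ_char (snd c) (x + real k * \<alpha>)) + (\<Sum>k<q. trig_poly cs (x + real k * \<alpha>))"
      by (simp add: sum.distrib sum_distrib_left)
    also have "norm \<dots> \<le> C1 * \<bar>real q * \<alpha> - of_int p\<bar> + C * \<bar>real q * \<alpha> - of_int p\<bar>"
    proof (rule order_trans[OF norm_triangle_ineq add_mono])
      have "norm (fst c * (\<Sum>k<q. circ_char (snd c) (x + real k * \<alpha>)))
          = norm (fst c) * norm (\<Sum>k<q. circ_char (snd c) (x + real k * \<alpha>))"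
        by (rule norm_mult)
      also have "\<dots> \<le> norm (fst c) * (2 * pi * \<bar>of_int (snd c)\<bar> / norm (circ_char (snd c) \<alpha> - 1)
          * \<bar>real q * \<alpha> - of_int p\<bar>)"
        using Cons.prems(2) by (intro mult_left_mono[OF birkhoff_sum_circ_char_le[OF assms(1)]]) auto
      finally show "norm (fst c * (\<Sum>k<q. circ_char (snd c) (x + real k * \<alpha>)))
          \<le> C1 * \<bar>real q * \<alpha> - of_int p\<bar>"
        unfolding C1_def mult.assoc .
    qed (rule C(2))
    finally show ?thesis by (simp add: algebra_simps)
  qed
  ultimately show ?case by (rule Cons.prems(1))
qed

section \<open>Approximation by trigonometric polynomials\<close>

lemma periodic_lift_to_circle:
  fixes \<phi> :: "real \<Rightarrow> 'a::topological_space"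
  assumes cont: "continuous_on UNIV \<phi>" and periodic: "\<And>t. \<phi> (t + 1) = \<phi> t"
  obtains \<psi> where "continuous_on (sphere 0 1) \<psi>" "\<And>t. \<psi> (circ_char 1 t) = \<phi> t"
proof
  \<comment> \<open>\<open>Arg\<close> jumps on the negative real axis; continuity of \<open>\<psi>\<close> comes from the quotient
    map \<open>circ_char 1\<close> on \<open>[-1, 1]\<close> instead.\<close>
  define \<psi> where "\<psi> z = \<phi> (Arg z / (2 * pi))" for z
  show lift: "\<psi> (circ_char 1 t) = \<phi> t" for t
  proof -
    have "exp (\<i> * complex_of_real (Arg (circ_char 1 t))) = exp (\<i> * complex_of_real (2 * pi * t))"
      using Arg_eq[of "circ_char 1 t"] by (simp add: circ_char_def mult.commute)
    then obtain n :: int where "\<i> * complex_of_real (Arg (circ_char 1 t))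
        = \<i> * complex_of_real (2 * pi * t) + of_int (2 * n) * pi * \<i>"
      using exp_eq by blast
    then have "Arg (circ_char 1 t) / (2 * pi) = t + of_int n"
      by (simp add: field_simps complex_eq_iff)
    then show ?thesis by (simp add: \<psi>_def periodic_shift_int[of \<phi>, OF periodic])
  qed
  have onto: "circ_char 1 ` {-1..1} = sphere 0 1"
  proof
    show "sphere 0 1 \<subseteq> circ_char 1 ` {-1..1}"
    proof
      fix z :: complex assume z: "z \<in> sphere 0 1"
      then have "z \<noteq> 0" by auto
      with z have "z = circ_char 1 (Arg z / (2 * pi))"
        using Arg_eq[of z] by (simp add: circ_char_def mult.commute)
      moreover have "Arg z / (2 * pi) \<in> {-1..1}"
        using mpi_less_Arg[of z] Arg_le_pi[of z] by (auto simp: field_simps)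
      ultimately show "z \<in> circ_char 1 ` {-1..1}" by blast
    qed
  qed auto
  have "quotient_map (top_of_set {-1..1}) (top_of_set (sphere 0 1)) (circ_char 1)"
  proof (rule continuous_imp_quotient_map)
    have "continuous_on {-1..1} (circ_char 1)"
      by (rule continuous_on_vector_derivative)
         (rule has_vector_derivative_at_within[OF has_vector_derivative_circ_char])
    then show "continuous_map (top_of_set {-1..1}) (top_of_set (sphere 0 1)) (circ_char 1)"
      using onto by (auto simp: continuous_map_in_subtopology)
    show "compact_space (top_of_set {-1..1::real})"
      by (simp add: compact_space_subtopology compactin_euclidean_iff)
    show "Hausdorff_space (top_of_set (sphere (0::complex) 1))"
      by (simp add: Hausdorff_space_subtopology)
    show "circ_char 1 ` topspace (top_of_set {-1..1}) = topspace (top_of_set (sphere 0 1))"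
      by (simp add: onto)
  qed
  moreover have "continuous_map (top_of_set {-1..1}) euclidean (\<psi> \<circ> circ_char 1)"
    using continuous_on_subset[OF cont] by (simp add: o_def lift)
  ultimately have "continuous_map (top_of_set (sphere 0 1)) euclidean \<psi>"
    by (rule continuous_compose_quotient_map)
  then show "continuous_on (sphere 0 1) \<psi>" by simp
qed

lemma periodic_real_trig_approx:
  fixes \<phi> :: "real \<Rightarrow> real"
  assumes cont: "continuous_on UNIV \<phi>" and periodic: "\<And>t. \<phi> (t + 1) = \<phi> t" and "e > 0"
  obtains cs where "\<And>t. \<bar>\<phi> t - Re (trig_poly cs t)\<bar> < e"
proof -
  obtain \<psi> where \<psi>: "continuous_on (sphere 0 1) \<psi>" "\<And>t. \<psi> (circ_char 1 t) = \<phi> t"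
    using periodic_lift_to_circle[OF cont periodic] by blast
  define P where "P u \<longleftrightarrow> continuous_on (sphere 0 1) u \<and>
      (\<exists>cs. \<forall>t. u (circ_char 1 t) = Re (trig_poly cs t))"
    for u :: "complex \<Rightarrow> real"
  have "\<exists>u. P u \<and> (\<forall>z\<in>sphere 0 1. \<bar>\<psi> z - u z\<bar> < e)"
  proof (rule Stone_Weierstrass_HOL[OF _ _ _ _ _ _ \<psi>(1) \<open>e > 0\<close>])
    show "P (\<lambda>z. c)" for c
      unfolding P_def by (auto intro!: exI[of _ "[(of_real c, 0)]"])
    show "P u \<Longrightarrow> continuous_on (sphere 0 1) u" for u
      by (simp add: P_def)
    show "P (\<lambda>z. u z + v z)" if "P u \<and> P v" for u v
    proof -
      from that obtain cs ds where "\<forall>t. u (circ_char 1 t) = Re (trig_poly cs t)"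
        "\<forall>t. v (circ_char 1 t) = Re (trig_poly ds t)" by (auto simp: P_def)
      with that show ?thesis
        unfolding P_def by (intro conjI continuous_on_add exI[of _ "cs @ ds"]) auto
    qed
    show "P (\<lambda>z. u z * v z)" if "P u \<and> P v" for u v
    proof -
      from that obtain cs ds where "\<forall>t. u (circ_char 1 t) = Re (trig_poly cs t)"
        "\<forall>t. v (circ_char 1 t) = Re (trig_poly ds t)" by (auto simp: P_def)
      moreover have "Re a * Re b = Re (1 / 2 * (a * b + a * cnj b))" for a b :: complex
        by (simp add: field_simps)
      ultimately show ?thesis using that unfolding P_def
        by (intro conjI continuous_on_mult
            exI[of _ "scale_coeffs (1 / 2) (mult_coeffs cs ds @ mult_coeffs cs (cnj_coeffs ds))"])
          auto
    qed
    show "\<exists>u. P u \<and> u z \<noteq> u w" if "z \<in> sphere 0 1 \<and> w \<in> sphere 0 1 \<and> z \<noteq> w" for z w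
    proof -
      have "P Re"
        unfolding P_def by (intro conjI exI[of _ "[(1, 1)]"] continuous_on_Re continuous_on_id) auto
      moreover have "P Im"
        unfolding P_def by (intro conjI exI[of _ "[(- \<i>, 1)]"] continuous_on_Im continuous_on_id) auto
      ultimately show ?thesis using that complex_eqI by blast
    qed
  qed auto
  then obtain u cs where "\<forall>z\<in>sphere 0 1. \<bar>\<psi> z - u z\<bar> < e" "\<forall>t. u (circ_char 1 t) = Re (trig_poly cs t)"
    by (auto simp: P_def)
  then have "\<bar>\<phi> t - Re (trig_poly cs t)\<bar> < e" for t
    using \<psi>(2)[of t] by (metis mem_sphere_0 norm_circ_char)
  then show ?thesis by (rule that)
qed

lemma periodic_trig_approx:
  fixes \<phi> :: "real \<Rightarrow> complex"
  assumes cont: "continuous_on UNIV \<phi>" and periodic: "\<And>t. \<phi> (t + 1) = \<phi> t" and "e > 0"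
  obtains cs where "\<And>t. norm (\<phi> t - trig_poly cs t) \<le> e"
proof -
  obtain as where as: "\<And>t. \<bar>Re (\<phi> t) - Re (trig_poly as t)\<bar> < e / 2"
    using periodic_real_trig_approx[of "\<lambda>t. Re (\<phi> t)" "e / 2"] continuous_on_Re[OF cont]
      periodic \<open>e > 0\<close> by auto
  obtain bs where bs: "\<And>t. \<bar>Im (\<phi> t) - Re (trig_poly bs t)\<bar> < e / 2"
    using periodic_real_trig_approx[of "\<lambda>t. Im (\<phi> t)" "e / 2"] continuous_on_Im[OF cont]
      periodic \<open>e > 0\<close> by auto
  define cs where
    "cs = scale_coeffs (1 / 2) (as @ cnj_coeffs as) @ scale_coeffs (\<i> / 2) (bs @ cnj_coeffs bs)"
  have "trig_poly cs t
      = complex_of_real (Re (trig_poly as t)) + \<i> * complex_of_real (Re (trig_poly bs t))" for t by (simp add: cs_def complex_add_cnj field_simps)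
  then have "norm (\<phi> t - trig_poly cs t) \<le> e" for t
    using cmod_le[of "\<phi> t - trig_poly cs t"] as[of t] bs[of t] by simp
  then show ?thesis by (rule that)
qed

lemma C1_periodic_trig_poly_decomposition:
  fixes f D G :: "real \<Rightarrow> complex"
  assumes deriv: "\<And>t. (f has_vector_derivative D t) (at t)" and cont: "continuous_on UNIV D"
    and primitive: "\<And>t. (G has_vector_derivative f t) (at t)" and periodic: "\<And>t. G (t + 1) = G t"
    and "\<epsilon> > 0"
  obtains cs H where "\<forall>c\<in>set cs. snd c \<noteq> 0"
    "\<epsilon>-lipschitz_on UNIV (\<lambda>t. f t - trig_poly cs t)"
    "\<And>t. (H has_vector_derivative f t - trig_poly cs t) (at t)" "\<And>t. H (t + 1) = H t"
proof -
  have f_periodic: "f (t + 1) = f t" for t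
    by (rule periodic_vector_derivative[OF periodic primitive])
  obtain ds where ds: "\<And>t. norm (D t - trig_poly ds t) \<le> \<epsilon> / 2"
    using periodic_trig_approx[OF cont periodic_vector_derivative[OF f_periodic deriv]] \<open>\<epsilon> > 0\<close>
    by (metis half_gt_zero)
  define ds' where "ds' = filter (\<lambda>c. snd c \<noteq> 0) ds"
  define m where "m = (\<Sum>c\<leftarrow>filter (\<lambda>c. snd c = 0) ds. fst c)"
  have ds_split: "trig_poly ds t = trig_poly ds' t + m" for t
    unfolding ds'_def m_def by (rule trig_poly_split_constant)
  have ds'_nonconst: "\<forall>c\<in>set ds'. snd c \<noteq> 0" by (simp add: ds'_def)
  define cs where "cs = antideriv_coeffs ds'"
  have cs_nonconst: "\<forall>c\<in>set cs. snd c \<noteq> 0"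
    using ds'_nonconst by (auto simp: cs_def antideriv_coeffs_def)
  define h where "h t = f t - trig_poly cs t" for t
  have h_deriv: "(h has_vector_derivative D t - trig_poly ds' t) (at t)" for t
    unfolding h_def[abs_def] cs_def
    by (rule has_vector_derivative_diff[OF deriv
          has_vector_derivative_trig_poly_antideriv[OF ds'_nonconst]])
  \<comment> \<open>The constant term is small because \<open>h\<close> is periodic, so its derivative has mean zero.\<close>
  have m_small: "norm m \<le> \<epsilon> / 2"
  proof -
    have "((\<lambda>t. h t - m * complex_of_real t) has_vector_derivative D t - trig_poly ds' t - m) (at t)"
      for t by (rule derivative_eq_intros h_deriv | simp)+
    then have "((\<lambda>t. h t - m * complex_of_real t) has_vector_derivative D t - trig_poly ds t) (at t)"
      for t by (simp add: ds_split algebra_simps)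
    then have "(\<epsilon> / 2)-lipschitz_on UNIV (\<lambda>t. h t - m * complex_of_real t)"
      by (rule vector_derivative_bound_imp_lipschitz) (rule ds)
    from lipschitz_on_normD[OF this, of 1 0] show ?thesis
      using f_periodic[of 0] trig_poly_periodic[of cs 0] by (simp add: h_def)
  qed
  have "norm (D t - trig_poly ds' t) \<le> \<epsilon>" for t
    using ds[of t] m_small norm_triangle_ineq[of "D t - trig_poly ds t" m]
    by (simp add: ds_split algebra_simps)
  with h_deriv have "\<epsilon>-lipschitz_on UNIV h"
    by (rule vector_derivative_bound_imp_lipschitz)
  moreover have "((\<lambda>t. G t - trig_poly (antideriv_coeffs cs) t) has_vector_derivative h t) (at t)" for t
    unfolding h_def
    by (rule has_vector_derivative_diff[OF primitive
          has_vector_derivative_trig_poly_antideriv[OF cs_nonconst]])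
  moreover have "G (t + 1) - trig_poly (antideriv_coeffs cs) (t + 1)
      = G t - trig_poly (antideriv_coeffs cs) t" for t by (simp add: periodic trig_poly_periodic)
  ultimately show ?thesis using that cs_nonconst unfolding h_def[abs_def] by blast
qed

section \<open>Birkhoff sums at a rational approximation\<close>

lemma sum_rational_rotation:
  fixes g :: "real \<Rightarrow> 'a::comm_monoid_add"
  assumes periodic: "\<And>t. g (t + 1) = g t" and "q \<ge> 1" and "coprime p (int q)"
  shows "(\<Sum>k<q. g (real k * of_int p / real q)) = (\<Sum>j<q. g (real j / real q))"
proof -
  define \<sigma> where "\<sigma> k = nat ((int k * p) mod int q)" for k
  have "bij_betw \<sigma> {..<q} {..<q}"
  proof (rule bij_betw_imageI)
    show "inj_on \<sigma> {..<q}"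
    proof (rule inj_onI)
      fix k1 k2 assume k: "k1 \<in> {..<q}" "k2 \<in> {..<q}" and "\<sigma> k1 = \<sigma> k2"
      then have "(int k1 * p) mod int q = (int k2 * p) mod int q"
        using \<open>q \<ge> 1\<close> by (simp add: \<sigma>_def nat_eq_iff)
      then have "int q dvd (int k1 - int k2) * p"
        by (simp add: mod_eq_dvd_iff left_diff_distrib)
      then have "int q dvd int k1 - int k2"
        using \<open>coprime p (int q)\<close> by (simp add: coprime_commute coprime_dvd_mult_left_iff)
      show "k1 = k2"
      proof (rule ccontr)
        assume "k1 \<noteq> k2"
        with \<open>int q dvd int k1 - int k2\<close> have "\<bar>int q\<bar> \<le> \<bar>int k1 - int k2\<bar>"
          by (intro dvd_imp_le_int) auto
        with k show False by simp
      qed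
    qed
    then show "\<sigma> ` {..<q} = {..<q}"
    proof (intro card_subset_eq)
      show "\<sigma> ` {..<q} \<subseteq> {..<q}" using \<open>q \<ge> 1\<close> by (auto simp: \<sigma>_def nat_less_iff)
    qed (simp_all add: card_image)
  qed
  moreover have "g (real k * of_int p / real q) = g (real (\<sigma> k) / real q)" for k
  proof -
    have "real k * of_int p = real q * of_int ((int k * p) div int q) + of_int ((int k * p) mod int q)"
      by (metis div_mult_mod_eq mult.commute of_int_add of_int_mult of_int_of_nat_eq)
    moreover have "real (\<sigma> k) = of_int ((int k * p) mod int q)"
      using \<open>q \<ge> 1\<close> by (simp add: \<sigma>_def)
    ultimately have "real k * of_int p / real q = real (\<sigma> k) / real q + of_int ((int k * p) div int q)"
      using \<open>q \<ge> 1\<close> by (simp add: field_simps)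
    then show ?thesis by (simp add: periodic_shift_int[of g, OF periodic])
  qed
  ultimately show ?thesis
    by (simp add: sum.reindex_bij_betw[where g = "\<lambda>j. g (real j / real q)"])
qed

lemma riemann_sum_periodic_primitive_le:
  fixes h H :: "real \<Rightarrow> 'a::real_normed_vector"
  assumes primitive: "\<And>t. (H has_vector_derivative h t) (at t)"
    and periodic: "\<And>t. H (t + 1) = H t"
    and lip: "L-lipschitz_on UNIV h" and "q \<ge> 1"
  shows "norm (\<Sum>j<q. h (x + real j / real q)) \<le> L"
proof -
  define a where "a j = x + real j / real q" for j
  have step: "norm (h (a j) - real q *\<^sub>R (H (a (Suc j)) - H (a j))) \<le> L / real q" for j
  proof -
    have len: "a (Suc j) - a j = 1 / real q" by (simp add: a_def add_divide_distrib)
    have le: "a j \<le> a (Suc j)" by (simp add: a_def divide_right_mono)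
    have "norm (H (a (Suc j)) - H (a j) - (a (Suc j) - a j) *\<^sub>R h (a j))
        \<le> norm (a (Suc j) - a j) * (L / real q)"
    proof (rule vector_differentiable_bound_linearization[where S = "{a j..a (Suc j)}"])
      show "(H has_vector_derivative h t) (at t within {a j..a (Suc j)})" for t
        by (rule has_vector_derivative_at_within[OF primitive])
      show "closed_segment (a j) (a (Suc j)) \<subseteq> {a j..a (Suc j)}"
        using le by (simp add: closed_segment_eq_real_ivl)
      show "norm (h t - h (a j)) \<le> L / real q" if "t \<in> {a j..a (Suc j)}" for t
      proof -
        have "norm (h t - h (a j)) \<le> L * norm (t - a j)" by (rule lipschitz_on_normD[OF lip]) auto
        also have "\<dots> \<le> L * (1 / real q)"
          using that len lipschitz_on_nonneg[OF lip] by (intro mult_left_mono) auto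
        finally show ?thesis by simp
      qed
    qed (use le in simp)
    then have "real q * norm (H (a (Suc j)) - H (a j) - (1 / real q) *\<^sub>R h (a j)) \<le> L / real q"
      using \<open>q \<ge> 1\<close> by (simp add: len field_simps)
    also have "real q * norm (H (a (Suc j)) - H (a j) - (1 / real q) *\<^sub>R h (a j))
        = norm (real q *\<^sub>R (H (a (Suc j)) - H (a j) - (1 / real q) *\<^sub>R h (a j)))"
      by simp
    also have "real q *\<^sub>R (H (a (Suc j)) - H (a j) - (1 / real q) *\<^sub>R h (a j))
        = real q *\<^sub>R (H (a (Suc j)) - H (a j)) - h (a j)"
      using \<open>q \<ge> 1\<close> by (simp add: scaleR_right_diff_distrib)
    also have "norm (real q *\<^sub>R (H (a (Suc j)) - H (a j)) - h (a j))
        = norm (h (a j) - real q *\<^sub>R (H (a (Suc j)) - H (a j)))"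
      by (rule norm_minus_commute)
    finally show ?thesis .
  qed
  have "(\<Sum>j<q. real q *\<^sub>R (H (a (Suc j)) - H (a j))) = real q *\<^sub>R (H (a q) - H (a 0))"
    by (simp add: sum_lessThan_telescope[of "\<lambda>j. H (a j)"] flip: scaleR_right.sum)
  also have "a q = a 0 + 1" using \<open>q \<ge> 1\<close> by (simp add: a_def)
  finally have telescope: "(\<Sum>j<q. real q *\<^sub>R (H (a (Suc j)) - H (a j))) = 0"
    by (simp add: periodic)
  have "norm (\<Sum>j<q. h (a j)) = norm (\<Sum>j<q. h (a j) - real q *\<^sub>R (H (a (Suc j)) - H (a j)))"
    by (simp add: sum_subtractf telescope)
  also have "\<dots> \<le> (\<Sum>j<q. L / real q)"
    by (rule order_trans[OF norm_sum sum_mono[OF step]])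
  also have "\<dots> = L" using \<open>q \<ge> 1\<close> by simp
  finally show ?thesis by (simp add: a_def)
qed

lemma birkhoff_sum_lipschitz_le:
  fixes h H :: "real \<Rightarrow> 'a::real_normed_vector"
  assumes primitive: "\<And>t. (H has_vector_derivative h t) (at t)"
    and periodic: "\<And>t. H (t + 1) = H t"
    and lip: "L-lipschitz_on UNIV h"
    and "q \<ge> 1" and "coprime p (int q)" and approx: "\<bar>real q * \<alpha> - of_int p\<bar> \<le> 1 / real q"
  shows "norm (\<Sum>k<q. h (x + real k * \<alpha>)) \<le> 2 * L"
proof -
  have close: "norm (h (x + real k * \<alpha>) - h (x + real k * of_int p / real q)) \<le> L / real q"
    if "k < q" for k
  proof -
    have "(x + real k * \<alpha>) - (x + real k * of_int p / real q)
        = real k / real q * (real q * \<alpha> - of_int p)"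
      using \<open>q \<ge> 1\<close> by (simp add: field_simps)
    then have "\<bar>(x + real k * \<alpha>) - (x + real k * of_int p / real q)\<bar>
        = real k / real q * \<bar>real q * \<alpha> - of_int p\<bar>"
      by (simp add: abs_mult)
    also have "\<dots> \<le> 1 * (1 / real q)"
      using that approx by (intro mult_mono) auto
    finally have "L * \<bar>(x + real k * \<alpha>) - (x + real k * of_int p / real q)\<bar> \<le> L * (1 / real q)"
      using lipschitz_on_nonneg[OF lip] by (intro mult_left_mono) auto
    with lipschitz_on_normD[OF lip] show ?thesis
      by (metis UNIV_I order_trans real_norm_def times_divide_eq_right mult_1_right)
  qed
  have "norm ((\<Sum>k<q. h (x + real k * \<alpha>)) - (\<Sum>k<q. h (x + real k * of_int p / real q)))
      \<le> (\<Sum>k<q. L / real q)"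
    unfolding sum_subtractf[symmetric] by (rule order_trans[OF norm_sum sum_mono]) (use close in auto)
  also have "\<dots> = L" using \<open>q \<ge> 1\<close> by simp
  finally have "norm ((\<Sum>k<q. h (x + real k * \<alpha>)) - (\<Sum>k<q. h (x + real k * of_int p / real q))) \<le> L" .
  moreover have "(\<Sum>k<q. h (x + real k * of_int p / real q)) = (\<Sum>j<q. h (x + real j / real q))"
    using sum_rational_rotation[of "\<lambda>t. h (x + t)", OF _ \<open>q \<ge> 1\<close> \<open>coprime p (int q)\<close>]
      periodic_vector_derivative[OF periodic primitive]
    by (simp add: add.assoc[symmetric])
  moreover have "norm (\<Sum>j<q. h (x + real j / real q)) \<le> L"
    by (rule riemann_sum_periodic_primitive_le[OF primitive periodic lip \<open>q \<ge> 1\<close>])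
  ultimately show ?thesis
    using norm_triangle_sub[of "\<Sum>k<q. h (x + real k * \<alpha>)" "\<Sum>k<q. h (x + real k * of_int p / real q)"]
    by simp
qed

section \<open>Birkhoff sums along the convergents\<close>

lemma birkhoff_sums_cf_q_uniform_limit:
  fixes f D G :: "real \<Rightarrow> complex"
  assumes "\<alpha> \<notin> \<rat>"
    and deriv: "\<And>t. (f has_vector_derivative D t) (at t)" and cont: "continuous_on UNIV D"
    and primitive: "\<And>t. (G has_vector_derivative f t) (at t)" and periodic: "\<And>t. G (t + 1) = G t"
  shows "uniform_limit UNIV (\<lambda>l x. \<Sum>k<nat (cf_q \<alpha> l). f (x + real k * \<alpha>)) (\<lambda>x. 0) sequentially"
  unfolding uniform_limit_iff dist_norm
proof (intro allI impI)
  fix e :: real assume "e > 0"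
  then obtain cs H where cs_nonconst: "\<forall>c\<in>set cs. snd c \<noteq> 0"
    and lip: "(e / 4)-lipschitz_on UNIV (\<lambda>t. f t - trig_poly cs t)"
    and H: "\<And>t. (H has_vector_derivative f t - trig_poly cs t) (at t)" "\<And>t. H (t + 1) = H t"
    using C1_periodic_trig_poly_decomposition[OF deriv cont primitive periodic, of "e / 4"] by auto
  obtain C where "C \<ge> 0"
    and C: "\<And>q p x. norm (\<Sum>k<q. trig_poly cs (x + real k * \<alpha>)) \<le> C * \<bar>real q * \<alpha> - of_int p\<bar>"
    using birkhoff_sum_trig_poly_le[OF \<open>\<alpha> \<notin> \<rat>\<close> cs_nonconst] by blast
  have "((\<lambda>l. C / real_of_int (cf_q \<alpha> l)) \<longlongrightarrow> 0) sequentially"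
    by (intro tendsto_divide_0[OF tendsto_const] filterlim_at_top_imp_at_infinity
        cf_q_tendsto_at_top \<open>\<alpha> \<notin> \<rat>\<close>)
  then have "\<forall>\<^sub>F l in sequentially. C / real_of_int (cf_q \<alpha> l) < e / 2"
    by (rule order_tendstoD(2)) (use \<open>e > 0\<close> in simp)
  then show "\<forall>\<^sub>F l in sequentially. \<forall>x\<in>UNIV. norm ((\<Sum>k<nat (cf_q \<alpha> l). f (x + real k * \<alpha>)) - 0) < e"
  proof eventually_elim
    case (elim l)
    define q where "q = nat (cf_q \<alpha> l)"
    have "cf_q \<alpha> l \<ge> 1" by (rule cf_q_ge_1[OF \<open>\<alpha> \<notin> \<rat>\<close>])
    then have q: "q \<ge> 1" "real q = real_of_int (cf_q \<alpha> l)" by (simp_all add: q_def)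
    have "coprime (cf_p \<alpha> l) (int q)"
      using coprime_cf_p_cf_q \<open>cf_q \<alpha> l \<ge> 1\<close> by (simp add: q_def)
    moreover have approx: "\<bar>real q * \<alpha> - of_int (cf_p \<alpha> l)\<bar> \<le> 1 / real q"
      using cf_convergent_error_le[OF \<open>\<alpha> \<notin> \<rat>\<close>, of l] by (simp add: q)
    ultimately have remainder:
      "norm (\<Sum>k<q. f (x + real k * \<alpha>) - trig_poly cs (x + real k * \<alpha>)) \<le> e / 2" for x using birkhoff_sum_lipschitz_le[OF H lip q(1)] by simp
    have trig_le: "norm (\<Sum>k<q. trig_poly cs (x + real k * \<alpha>)) \<le> C / real q" for x
      using order_trans[OF C mult_left_mono[OF approx \<open>C \<ge> 0\<close>]] by simp
    have trig: "norm (\<Sum>k<q. trig_poly cs (x + real k * \<alpha>)) < e / 2" for x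
      using order_le_less_trans[OF trig_le[of x, unfolded q(2)] elim] .
    show ?case
    proof
      fix x
      have "(\<Sum>k<q. f (x + real k * \<alpha>)) = (\<Sum>k<q. f (x + real k * \<alpha>) - trig_poly cs (x + real k * \<alpha>))
          + (\<Sum>k<q. trig_poly cs (x + real k * \<alpha>))"
        by (simp add: sum_subtractf)
      then show "norm ((\<Sum>k<nat (cf_q \<alpha> l). f (x + real k * \<alpha>)) - 0) < e"
        using norm_triangle_lt[OF add_le_less_mono[OF remainder trig]] by (simp add: q_def)
    qed
  qed
qed

theorem mainTheorem3:
  fixes \<alpha> :: real
  assumes "\<alpha> \<notin> \<rat>"
  shows "\<exists>m :: nat \<Rightarrow> nat. strict_mono m \<and>
    (\<forall>f :: real \<Rightarrow> complex. analytic_on_circle f \<and> integral {0..1} f = 0 \<longrightarrow>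
       uniform_limit UNIV
         (\<lambda>l x. \<Sum>k<nat (cf_q \<alpha> (m l)). f (x + real k * \<alpha>))
         (\<lambda>x. 0) sequentially)"
proof (intro exI[of _ "\<lambda>l. l"] conjI allI impI)
  show "strict_mono (\<lambda>l::nat. l)" by (simp add: strict_mono_def)
  fix f :: "real \<Rightarrow> complex"
  assume f: "analytic_on_circle f \<and> integral {0..1} f = 0"
  then obtain D G where deriv: "\<And>t. (f has_vector_derivative D t) (at t)" "continuous_on UNIV D"
    and primitive: "\<And>t. (G has_vector_derivative f t) (at t)"
    using analytic_on_circle_derivative_primitive by blast
  have "G (t + 1) = G t" for t
    using f periodic_primitive[OF _ _ primitive] by (simp add: analytic_on_circle_def)
  with assms deriv primitive
  show "uniform_limit UNIV (\<lambda>l x. \<Sum>k<nat (cf_q \<alpha> l). f (x + real k * \<alpha>)) (\<lambda>x. 0) sequentially"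
    by (rule birkhoff_sums_cf_q_uniform_limit)
qed

end
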